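(* Let $\mathcal{X}=\{X_i,\mathcal{O}_i\}_{i\in\mathcal{I}}$ be a proper partition of $\mathbb{R}^n$ and $V\in\mathscr{P}(\mathcal{X})$. Then $V$ is nonpathological.
   Context: Proper partition $\{X_i,\mathcal{O}_i\}_{i\in\mathcal{I}}$, $\mathcal{I}=\{1,\dots,K\}$: closed $X_i$, open $\mathcal{O}_i$ with (a) $\bigcup_iX_i=\mathbb{R}^n$; (b) $X_i\subseteq\mathcal{O}_i$; (c) $\overline{\operatorname{int}(X_i)}=X_i$; (d) $\operatorname{bd}(X_i)$ has Lebesgue measure zero; (e) $X_i\cap X_j=\operatorname{bd}(X_i)\cap\operatorname{bd}(X_j)$ for $i\ne j$. $\mathscr{P}(\mathcal{X})$: continuous $V:\mathbb{R}^n\to\mathbb{R}$ for which there exist $V_i\in\mathcal{C}^1(\mathcal{O}_i,\mathbb{R})$ with $V(x)=V_i(x)$ for $x\in X_i$ (such $V$ is locally Lipschitz). Clarke generalized gradient: $\partial V(x)=\operatorname{co}\{\lim_k\nabla V(x_k):x_k\to x,\ x_k\notin\mathcal{N}_V\}$. A locally Lipschitz $V$ is nonpathological if for every absolutely continuous $\varphi:\mathbb{R}_+\to\mathbb{R}^n$, for almost every $t\in\mathbb{R}_+$ there exists $a_t\in\mathbb{R}$ with $\langle v,\dot\varphi(t)\rangle=a_t$ for all $v\in\partial V(\varphi(t))$. *)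

theory Defs
  imports "HOL-Analysis.Analysis"
begin

definition proper_partition :: "nat \<Rightarrow> (nat \<Rightarrow> 'a::euclidean_space set) \<Rightarrow> (nat \<Rightarrow> 'a set) \<Rightarrow> bool" where
  "proper_partition K X Op \<longleftrightarrow>
     (\<forall>i\<in>{1..K}. closed (X i) \<and> open (Op i)) \<and>
     (\<Union>i\<in>{1..K}. X i) = UNIV \<and>
     (\<forall>i\<in>{1..K}. X i \<subseteq> Op i) \<and>
     (\<forall>i\<in>{1..K}. closure (interior (X i)) = X i) \<and>
     (\<forall>i\<in>{1..K}. frontier (X i) \<in> null_sets lebesgue) \<and>
     (\<forall>i\<in>{1..K}. \<forall>j\<in>{1..K}. i \<noteq> j \<longrightarrow> X i \<inter> X j = frontier (X i) \<inter> frontier (X j))"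

definition C1_on :: "'a::euclidean_space set \<Rightarrow> ('a \<Rightarrow> real) \<Rightarrow> bool" where
  "C1_on S f \<longleftrightarrow> (\<exists>D. (\<forall>x\<in>S. (f has_derivative (\<lambda>h. D x \<bullet> h)) (at x)) \<and> continuous_on S D)"

definition piecewise_C1 :: "nat \<Rightarrow> (nat \<Rightarrow> 'a::euclidean_space set) \<Rightarrow> (nat \<Rightarrow> 'a set) \<Rightarrow> ('a \<Rightarrow> real) \<Rightarrow> bool" where
  "piecewise_C1 K X Op V \<longleftrightarrow> continuous_on UNIV V \<and>
     (\<exists>Vs. \<forall>i\<in>{1..K}. C1_on (Op i) (Vs i) \<and> (\<forall>x\<in>X i. V x = Vs i x))"

definition locally_lipschitz :: "('a::euclidean_space \<Rightarrow> real) \<Rightarrow> bool" where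
  "locally_lipschitz V \<longleftrightarrow> (\<forall>x. \<exists>e>0. \<exists>L. lipschitz_on L (ball x e) V)"

definition clarke_grad :: "('a::euclidean_space \<Rightarrow> real) \<Rightarrow> 'a \<Rightarrow> 'a set" where
  "clarke_grad V x = convex hull {g. \<exists>xs gs. (\<forall>k. (V has_derivative (\<lambda>h. gs k \<bullet> h)) (at (xs k)))
        \<and> xs \<longlonglongrightarrow> x \<and> gs \<longlonglongrightarrow> g}"

definition abs_cont_Rplus :: "(real \<Rightarrow> 'a::euclidean_space) \<Rightarrow> bool" where
  "abs_cont_Rplus \<phi> \<longleftrightarrow> (\<forall>b\<ge>0. \<forall>\<epsilon>>0. \<exists>\<delta>>0. \<forall>(n::nat) (a::nat \<Rightarrow> real) (c::nat \<Rightarrow> real).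
      (\<forall>k<n. 0 \<le> a k \<and> a k \<le> c k \<and> c k \<le> b) \<and>
      (\<forall>k<n. \<forall>l<n. k \<noteq> l \<longrightarrow> c k \<le> a l \<or> c l \<le> a k) \<and>
      (\<Sum>k<n. c k - a k) < \<delta>
      \<longrightarrow> (\<Sum>k<n. norm (\<phi> (c k) - \<phi> (a k))) < \<epsilon>)"

definition nonpathological :: "('a::euclidean_space \<Rightarrow> real) \<Rightarrow> bool" where
  "nonpathological V \<longleftrightarrow> locally_lipschitz V \<and>
     (\<forall>\<phi>. abs_cont_Rplus \<phi> \<longrightarrow>
        (AE t in lborel. 0 \<le> t \<longrightarrow>
           (\<forall>d. (\<phi> has_vector_derivative d) (at t) \<longrightarrow>
              (\<exists>a. \<forall>v\<in>clarke_grad V (\<phi> t). v \<bullet> d = a))))"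

end

theory Submission
  imports Defs
begin

text \<open>
  At a point where V is differentiable, its gradient is the gradient of one of the pieces
  containing the point: otherwise, moving in a direction transversal to all the differences of
  gradients, one would leave every piece at once. As the pieces are closed and their gradients
  continuous, the Clarke generalized gradient at x therefore lies in the convex hull of the
  gradients D i x of the pieces X i containing x.

  So along an absolutely continuous curve \<phi> with \<phi>'(t) = d it suffices that the numbers
  D i (\<phi> t) \<bullet> d agree for all pieces containing \<phi> t. These numbers are the limits of the
  difference quotient of V \<circ> \<phi> at t along the times spent in the respective pieces. If two of them
  differed, a rational q strictly between them and different from all of them would make the
  difference quotient minus q change sign near t; by continuity it then has a constant sign on each
  side of t, so t is a strict local extremum of V (\<phi> s) - q s. Since a real function has only
  countably many strict local maxima and a set of reals only countably many isolated points, this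
  happens only for countably many t.
\<close>

section \<open>Strict local maxima of real functions\<close>

definition strict_local_max :: "('a::topological_space \<Rightarrow> 'b::order) \<Rightarrow> 'a \<Rightarrow> bool" where
  "strict_local_max f t \<longleftrightarrow> (\<forall>\<^sub>F s in at t. f s < f t)"

lemma countable_strict_local_max:
  fixes f :: "real \<Rightarrow> 'b::order"
  shows "countable {t. strict_local_max f t}"
proof -
  define M where "M = {t. strict_local_max f t}"
  have "\<exists>r\<in>\<rat> \<times> \<rat>. t \<in> {fst r<..<snd r} \<and> (\<forall>s\<in>{fst r<..<snd r} - {t}. f s < f t)"
    if "t \<in> M" for t
  proof -
    from that obtain e where "e > 0" and e: "\<And>s. s \<noteq> t \<Longrightarrow> dist s t < e \<Longrightarrow> f s < f t"
      unfolding M_def strict_local_max_def eventually_at by auto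
    obtain a b where "a \<in> \<rat>" "t - e < a" "a < t" "b \<in> \<rat>" "t < b" "b < t + e"
      using Rats_dense_in_real[of "t - e" t] Rats_dense_in_real[of t "t + e"] \<open>e > 0\<close> by auto
    with e show ?thesis
      by (intro bexI[of _ "(a, b)"]) (auto simp: dist_real_def abs_less_iff)
  qed
  then obtain g where g: "\<And>t. t \<in> M \<Longrightarrow> g t \<in> \<rat> \<times> \<rat> \<and> t \<in> {fst (g t)<..<snd (g t)} \<and>
      (\<forall>s\<in>{fst (g t)<..<snd (g t)} - {t}. f s < f t)"
    by metis
  have "inj_on g M"
  proof (rule inj_onI, rule ccontr)
    fix t t' assume "t \<in> M" "t' \<in> M" "g t = g t'" "t \<noteq> t'"
    with g[of t] g[of t'] have "f t' < f t" "f t < f t'" by auto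
    then show False by simp
  qed
  moreover have "g ` M \<subseteq> \<rat> \<times> \<rat>"
    using g by blast
  then have "countable (g ` M)"
    by (rule countable_subset) (intro countable_SIGMA countable_rat)
  ultimately show ?thesis
    unfolding M_def[symmetric] by (rule countable_image_inj_on[rotated])
qed

lemma countable_isolated_points:
  fixes A :: "real set"
  shows "countable {t. t isolated_in A}"
proof (rule countable_subset)
  show "{t. t isolated_in A} \<subseteq> {t. strict_local_max (indicator A :: real \<Rightarrow> real) t}"
  proof safe
    fix t assume "t isolated_in A"
    then have "t \<in> A" and "\<forall>\<^sub>F s in at t. s \<notin> A" by (simp_all add: isolated_in_altdef)
    from this(2) show "strict_local_max (indicator A :: real \<Rightarrow> real) t"
      unfolding strict_local_max_def by (rule eventually_mono) (simp add: \<open>t \<in> A\<close>)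
  qed
qed (rule countable_strict_local_max)

section \<open>Difference quotients of real functions\<close>

lemma sign_cases_if_nonvanishing:
  fixes P :: "'a::topological_space \<Rightarrow> real"
  assumes "continuous_on S P" "connected S" "\<And>s. s \<in> S \<Longrightarrow> P s \<noteq> 0"
  shows "(\<forall>s\<in>S. P s > 0) \<or> (\<forall>s\<in>S. P s < 0)"
proof (rule ccontr)
  assume "\<not> ?thesis"
  then obtain s1 s2 where "s1 \<in> S" "\<not> P s1 > 0" "s2 \<in> S" "\<not> P s2 < 0" by blast
  have "connected (P ` S)" by (rule connected_continuous_image[OF assms(1,2)])
  from connectedD_interval[OF this imageI imageI, of s1 s2 0] have "0 \<in> P ` S"
    using \<open>s1 \<in> S\<close> \<open>s2 \<in> S\<close> \<open>\<not> P s1 > 0\<close> \<open>\<not> P s2 < 0\<close> by simp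
  with assms(3) show False by auto
qed

lemma frequently_at_if_eventually_within:
  assumes "t islimpt S" "\<forall>\<^sub>F s in at t within S. P s"
  shows "\<exists>\<^sub>F s in at t. P s"
proof -
  from assms(2) have "\<forall>\<^sub>F s in at t. s \<in> S \<longrightarrow> P s"
    by (simp add: eventually_at_filter)
  moreover from assms(1) have "\<exists>\<^sub>F s in at t. s \<in> S"
    by (simp add: islimpt_conv_frequently_at)
  ultimately show ?thesis by (rule frequently_mp)
qed

lemma strict_local_extremum_if_slope_changes_sign:
  fixes G :: "real \<Rightarrow> real"
  assumes "open U" "t \<in> U" "continuous_on U G"
    and ne: "\<forall>\<^sub>F s in at t. G s \<noteq> G t"
    and neg: "\<exists>\<^sub>F s in at t. (G s - G t) / (s - t) < 0"
    and pos: "\<exists>\<^sub>F s in at t. (G s - G t) / (s - t) > 0"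
  shows "strict_local_max G t \<or> strict_local_max (\<lambda>s. - G s) t"
proof -
  obtain e1 where "e1 > 0" and e1: "\<And>s. s \<noteq> t \<Longrightarrow> dist s t < e1 \<Longrightarrow> G s \<noteq> G t"
    using ne unfolding eventually_at by auto
  obtain e2 where "e2 > 0" "ball t e2 \<subseteq> U"
    using assms(1,2) by (rule openE)
  define e where "e = min e1 e2"
  have "e > 0" using \<open>e1 > 0\<close> \<open>e2 > 0\<close> by (simp add: e_def)
  have ball_sub: "ball t e \<subseteq> U" using \<open>ball t e2 \<subseteq> U\<close> by (auto simp: e_def)
  have sign: "(\<forall>s\<in>J. G s - G t > 0) \<or> (\<forall>s\<in>J. G s - G t < 0)"
    if "J \<subseteq> ball t e - {t}" "connected J" for J
  proof (rule sign_cases_if_nonvanishing)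
    show "continuous_on J (\<lambda>s. G s - G t)"
      using that(1) ball_sub by (intro continuous_intros continuous_on_subset[OF assms(3)]) auto
    show "G s - G t \<noteq> 0" if "s \<in> J" for s
      using e1[of s] subsetD[OF \<open>J \<subseteq> ball t e - {t}\<close> that] by (auto simp: e_def dist_commute)
  qed fact
  have right: "(\<forall>s\<in>{t<..<t+e}. G s - G t > 0) \<or> (\<forall>s\<in>{t<..<t+e}. G s - G t < 0)"
    by (rule sign) (auto simp: dist_real_def)
  have left: "(\<forall>s\<in>{t-e<..<t}. G s - G t > 0) \<or> (\<forall>s\<in>{t-e<..<t}. G s - G t < 0)"
    by (rule sign) (auto simp: dist_real_def)
  have near: "\<forall>\<^sub>F s in at t. R s" if "\<And>s. s \<in> {t-e<..<t} \<union> {t<..<t+e} \<Longrightarrow> R s" for R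
    unfolding eventually_at
  proof (intro exI[of _ e] conjI ballI impI)
    fix s assume "s \<noteq> t \<and> dist s t < e"
    then show "R s" by (intro that) (auto simp: dist_real_def)
  qed (rule \<open>e > 0\<close>)
  from right left show ?thesis
  proof (elim disjE)
    assume "\<forall>s\<in>{t<..<t+e}. G s - G t > 0" "\<forall>s\<in>{t-e<..<t}. G s - G t > 0"
    then have "\<forall>\<^sub>F s in at t. - G s < - G t" by (intro near) auto
    then show ?thesis unfolding strict_local_max_def by simp
  next
    assume "\<forall>s\<in>{t<..<t+e}. G s - G t < 0" "\<forall>s\<in>{t-e<..<t}. G s - G t < 0"
    then have "\<forall>\<^sub>F s in at t. G s < G t" by (intro near) auto
    then show ?thesis unfolding strict_local_max_def by simp
  next
    assume "\<forall>s\<in>{t<..<t+e}. G s - G t > 0" "\<forall>s\<in>{t-e<..<t}. G s - G t < 0"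
    then have "\<forall>\<^sub>F s in at t. \<not> (G s - G t) / (s - t) < 0"
      by (intro near) (fastforce simp: divide_less_0_iff)
    with neg show ?thesis by (simp add: frequently_def)
  next
    assume "\<forall>s\<in>{t<..<t+e}. G s - G t < 0" "\<forall>s\<in>{t-e<..<t}. G s - G t > 0"
    then have "\<forall>\<^sub>F s in at t. \<not> (G s - G t) / (s - t) > 0"
      by (intro near) (fastforce simp: zero_less_divide_iff)
    with pos show ?thesis by (simp add: frequently_def)
  qed
qed

lemma slopes_eq_if_no_strict_local_extremum:
  fixes F :: "real \<Rightarrow> real" and S :: "'i \<Rightarrow> real set" and a :: "'i \<Rightarrow> real"
  assumes "finite K" "open U" "t \<in> U" "continuous_on U F"
    and cover: "\<forall>\<^sub>F s in at t. \<exists>k\<in>K. s \<in> S k"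
    and limpt: "\<And>k. k \<in> K \<Longrightarrow> t islimpt S k"
    and slope: "\<And>k. k \<in> K \<Longrightarrow> ((\<lambda>s. (F s - F t) / (s - t)) \<longlongrightarrow> a k) (at t within S k)"
    and no_extremum: "\<And>q. q \<in> \<rat> \<Longrightarrow>
      \<not> strict_local_max (\<lambda>s. F s - q * s) t \<and> \<not> strict_local_max (\<lambda>s. q * s - F s) t"
    and "i \<in> K" "j \<in> K"
  shows "a i = a j"
proof -
  have "a j \<le> a i" if "i \<in> K" "j \<in> K" for i j
  proof (rule ccontr)
    assume "\<not> a j \<le> a i"
    define b where "b = Max {a k | k. k \<in> K \<and> a k < a j}"
    have finite_below: "finite {a k | k. k \<in> K \<and> a k < a j}" using \<open>finite K\<close> by simp
    have below_b: "a k \<le> b" if "k \<in> K" "a k < a j" for k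
      unfolding b_def using finite_below that by (intro Max_ge) auto
    have "b \<in> {a k | k. k \<in> K \<and> a k < a j}"
      unfolding b_def using finite_below \<open>i \<in> K\<close> \<open>\<not> a j \<le> a i\<close> by (intro Max_in) auto
    then obtain q where "q \<in> \<rat>" "b < q" "q < a j"
      using Rats_dense_in_real[of b "a j"] by auto
    have q_ne: "a k \<noteq> q" if "k \<in> K" for k
      using below_b[OF that] \<open>b < q\<close> \<open>q < a j\<close> by (cases "a k < a j") auto
    define G where "G = (\<lambda>s. F s - q * s)"
    have slope_G: "((\<lambda>s. (G s - G t) / (s - t)) \<longlongrightarrow> a k - q) (at t within S k)" if "k \<in> K" for k
    proof (rule Lim_transform_eventually)
      show "((\<lambda>s. (F s - F t) / (s - t) - q) \<longlongrightarrow> a k - q) (at t within S k)"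
        using slope[OF that] by (intro tendsto_intros)
      have "\<forall>\<^sub>F s in at t within S k. s \<noteq> t"
        by (rule eventually_neq_at_within)
      then show "\<forall>\<^sub>F s in at t within S k. (F s - F t) / (s - t) - q = (G s - G t) / (s - t)"
        by (rule eventually_mono) (simp add: G_def field_simps)
    qed
    have "\<forall>\<^sub>F s in at t. s \<in> S k \<longrightarrow> G s \<noteq> G t" if "k \<in> K" for k
    proof -
      have "\<forall>\<^sub>F s in at t within S k. (G s - G t) / (s - t) \<noteq> 0"
        using slope_G[OF that] q_ne[OF that] by (intro tendsto_imp_eventually_ne) auto
      then show ?thesis
        by (simp add: eventually_at_filter)
    qed
    then have "\<forall>\<^sub>F s in at t. \<forall>k\<in>K. s \<in> S k \<longrightarrow> G s \<noteq> G t"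
      using \<open>finite K\<close> by (intro eventually_ball_finite) auto
    with cover have ne: "\<forall>\<^sub>F s in at t. G s \<noteq> G t"
      by eventually_elim blast
    have neg: "\<exists>\<^sub>F s in at t. (G s - G t) / (s - t) < 0"
      using \<open>i \<in> K\<close> below_b[OF \<open>i \<in> K\<close>] \<open>\<not> a j \<le> a i\<close> \<open>b < q\<close>
      by (intro frequently_at_if_eventually_within[OF limpt[OF \<open>i \<in> K\<close>]]
          order_tendstoD(2)[OF slope_G[OF \<open>i \<in> K\<close>]]) auto
    have pos: "\<exists>\<^sub>F s in at t. (G s - G t) / (s - t) > 0"
      using \<open>q < a j\<close>
      by (intro frequently_at_if_eventually_within[OF limpt[OF \<open>j \<in> K\<close>]]
          order_tendstoD(1)[OF slope_G[OF \<open>j \<in> K\<close>]]) auto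
    have "continuous_on U G"
      unfolding G_def by (intro continuous_intros assms(4))
    with assms(2,3) have "strict_local_max G t \<or> strict_local_max (\<lambda>s. - G s) t"
      using ne neg pos by (rule strict_local_extremum_if_slope_changes_sign)
    with no_extremum[OF \<open>q \<in> \<rat>\<close>] show False
      by (simp add: G_def)
  qed
  with \<open>i \<in> K\<close> \<open>j \<in> K\<close> show ?thesis by (meson antisym)
qed

section \<open>Absolutely continuous curves\<close>

lemma abs_cont_Rplus_imp_interval_bound:
  fixes \<phi> :: "real \<Rightarrow> 'a::euclidean_space" and b :: real
  assumes "abs_cont_Rplus \<phi>" "0 \<le> b" "0 < e"
  obtains \<delta> where "\<delta> > 0"
    "\<And>a c. 0 \<le> a \<Longrightarrow> a \<le> c \<Longrightarrow> c \<le> b \<Longrightarrow> c - a < \<delta> \<Longrightarrow> norm (\<phi> c - \<phi> a) < e"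
proof -
  obtain \<delta> where "\<delta> > 0" and \<delta>: "\<And>(n::nat) a c. (\<forall>k<n. 0 \<le> a k \<and> a k \<le> c k \<and> c k \<le> b) \<Longrightarrow>
      (\<forall>k<n. \<forall>l<n. k \<noteq> l \<longrightarrow> c k \<le> a l \<or> c l \<le> a k) \<Longrightarrow> (\<Sum>k<n. c k - a k) < \<delta> \<Longrightarrow>
      (\<Sum>k<n. norm (\<phi> (c k) - \<phi> (a k))) < e"
    using assms(1)[unfolded abs_cont_Rplus_def, rule_format, OF assms(2,3)] by blast
  have "norm (\<phi> c - \<phi> a) < e" if "0 \<le> a" "a \<le> c" "c \<le> b" "c - a < \<delta>" for a c
    using that \<delta>[of 1 "\<lambda>_. a" "\<lambda>_. c"] by simp
  with \<open>\<delta> > 0\<close> show thesis by (rule that)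
qed

lemma continuous_on_if_abs_cont_Rplus:
  assumes "abs_cont_Rplus \<phi>"
  shows "continuous_on {0<..} \<phi>"
proof (rule continuous_at_imp_continuous_on, rule ballI)
  fix s0 :: real assume "s0 \<in> {0<..}"
  show "isCont \<phi> s0" unfolding continuous_at_eps_delta
  proof (intro allI impI)
    fix e :: real assume "e > 0"
    obtain \<delta> where "\<delta> > 0" and
      \<delta>: "\<And>a c. 0 \<le> a \<Longrightarrow> a \<le> c \<Longrightarrow> c \<le> s0 + 1 \<Longrightarrow> c - a < \<delta> \<Longrightarrow> norm (\<phi> c - \<phi> a) < e"
      using abs_cont_Rplus_imp_interval_bound[OF assms _ \<open>e > 0\<close>, of "s0 + 1"] \<open>s0 \<in> {0<..}\<close> by auto
    have "dist (\<phi> s) (\<phi> s0) < e" if "dist s s0 < min \<delta> (min s0 1)" for s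
      using that \<delta>[of s s0] \<delta>[of s0 s]
      by (cases "s \<le> s0") (auto simp: dist_norm dist_real_def norm_minus_commute)
    with \<open>\<delta> > 0\<close> \<open>s0 \<in> {0<..}\<close> show "\<exists>d>0. \<forall>s. dist s s0 < d \<longrightarrow> dist (\<phi> s) (\<phi> s0) < e"
      by (intro exI[of _ "min \<delta> (min s0 1)"]) auto
  qed
qed

section \<open>Transversal directions and Lipschitz bounds\<close>

lemma exists_inner_nonzero:
  fixes w :: "'i \<Rightarrow> 'a::euclidean_space"
  assumes "finite A" "\<And>i. i \<in> A \<Longrightarrow> w i \<noteq> 0"
  obtains h where "\<And>i. i \<in> A \<Longrightarrow> w i \<bullet> h \<noteq> 0"
proof -
  have "negligible (\<Union>i\<in>A. {x. w i \<bullet> x = 0})"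
    using assms by (intro negligible_Union) (auto intro!: negligible_hyperplane)
  then have "(\<Union>i\<in>A. {x. w i \<bullet> x = 0}) \<noteq> UNIV"
    using non_negligible_UNIV by metis
  then show thesis using that by blast
qed

lemma eventually_ne_along_line:
  fixes f :: "'a::real_normed_vector \<Rightarrow> real"
  assumes "(f has_derivative f') (at y)" "f' h \<noteq> 0"
  shows "\<forall>\<^sub>F \<tau> in at 0. f (y + \<tau> *\<^sub>R h) \<noteq> f y"
proof -
  have "((\<lambda>\<tau>. y + \<tau> *\<^sub>R h) has_derivative (\<lambda>\<tau>. \<tau> *\<^sub>R h)) (at 0)"
    by (auto intro!: derivative_eq_intros)
  with assms(1) have "((\<lambda>\<tau>. f (y + \<tau> *\<^sub>R h)) has_derivative (\<lambda>\<tau>. f' (\<tau> *\<^sub>R h))) (at 0)"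
    using has_derivative_compose[of "\<lambda>\<tau>. y + \<tau> *\<^sub>R h" _ 0 UNIV f f'] by simp
  moreover have "(\<lambda>\<tau>. f' (\<tau> *\<^sub>R h)) = (\<lambda>\<tau>. f' h * \<tau>)"
    using has_derivative_bounded_linear[OF assms(1)] by (simp add: linear_simps bounded_linear.linear mult.commute)
  ultimately have "((\<lambda>\<tau>. f (y + \<tau> *\<^sub>R h)) has_real_derivative f' h) (at 0)"
    by (simp add: has_field_derivative_def)
  then have "((\<lambda>\<tau>. (f (y + \<tau> *\<^sub>R h) - f y) / \<tau>) \<longlongrightarrow> f' h) (at 0)"
    by (simp add: has_field_derivative_iff)
  then have "\<forall>\<^sub>F \<tau> in at 0. (f (y + \<tau> *\<^sub>R h) - f y) / \<tau> \<noteq> 0"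
    using assms(2) by (rule tendsto_imp_eventually_ne)
  then show ?thesis by (rule eventually_mono) auto
qed

lemma eventually_notin_closed:
  assumes "closed C" "y \<notin> C" "(f \<longlongrightarrow> y) F"
  shows "\<forall>\<^sub>F x in F. f x \<notin> C"
  using topological_tendstoD[OF assms(3), of "- C"] assms(1,2) by auto

lemma lipschitz_on_convex_closed_cover:
  fixes f :: "'a::real_normed_vector \<Rightarrow> 'b::metric_space"
  assumes "convex S" "finite I" "\<And>i. i \<in> I \<Longrightarrow> closed (C i)" "S \<subseteq> (\<Union>i\<in>I. C i)"
    and "\<And>i. i \<in> I \<Longrightarrow> M-lipschitz_on S (g i)"
    and "\<And>i x. i \<in> I \<Longrightarrow> x \<in> S \<Longrightarrow> x \<in> C i \<Longrightarrow> f x = g i x"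
    and "0 \<le> M"
  shows "M-lipschitz_on S f"
proof (rule lipschitz_onI)
  fix y z assume "y \<in> S" "z \<in> S"
  define \<gamma> where "\<gamma> = (\<lambda>\<tau>::real. y + \<tau> *\<^sub>R (z - y))"
  define T where "T i = {\<tau>\<in>{0..1}. \<gamma> \<tau> \<in> C i}" for i
  have \<gamma>_in_S: "\<gamma> \<tau> \<in> S" if "\<tau> \<in> {0..1}" for \<tau>
    using convexD_alt[OF assms(1) \<open>y \<in> S\<close> \<open>z \<in> S\<close>, of \<tau>] that
    by (simp add: \<gamma>_def algebra_simps)
  have \<gamma>_lipschitz: "(dist y z)-lipschitz_on A \<gamma>" for A
  proof (rule lipschitz_onI)
    fix s t
    have "\<gamma> s - \<gamma> t = (s - t) *\<^sub>R (z - y)" by (simp add: \<gamma>_def algebra_simps)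
    then show "dist (\<gamma> s) (\<gamma> t) \<le> dist y z * dist s t"
      by (simp add: dist_norm norm_minus_commute mult.commute)
  qed simp
  have "(M * dist y z)-lipschitz_on {0..1} (f \<circ> \<gamma>)"
  proof (rule lipschitz_on_closed_Union[where I=I and U=T])
    fix i assume "i \<in> I"
    have "continuous_on UNIV \<gamma>" unfolding \<gamma>_def by (intro continuous_intros)
    then have "closed ({0..1} \<inter> \<gamma> -` C i)"
      using assms(3)[OF \<open>i \<in> I\<close>] by (intro closed_Int closed_vimage) auto
    moreover have "T i = {0..1} \<inter> \<gamma> -` C i" by (auto simp: T_def)
    ultimately show "closed (T i)" by simp
    have "\<gamma> ` T i \<subseteq> S" using \<gamma>_in_S by (auto simp: T_def)
    then have "(M * dist y z)-lipschitz_on (T i) (g i \<circ> \<gamma>)"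
      by (intro lipschitz_on_compose[OF \<gamma>_lipschitz] lipschitz_on_subset[OF assms(5)[OF \<open>i \<in> I\<close>]])
    moreover have "(g i \<circ> \<gamma>) \<tau> = (f \<circ> \<gamma>) \<tau>" if "\<tau> \<in> T i" for \<tau>
      using that assms(6)[OF \<open>i \<in> I\<close>] \<gamma>_in_S by (auto simp: T_def)
    ultimately show "(M * dist y z)-lipschitz_on (T i) (f \<circ> \<gamma>)"
      by (simp add: lipschitz_on_def)
  next
    show "{0..1} \<subseteq> (\<Union>i\<in>I. T i)"
      using \<gamma>_in_S assms(4) by (fastforce simp: T_def)
  qed (use assms in auto)
  then have "dist ((f \<circ> \<gamma>) 0) ((f \<circ> \<gamma>) 1) \<le> M * dist y z * dist (0::real) 1"
    by (rule lipschitz_onD) auto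
  then show "dist (f y) (f z) \<le> M * dist y z"
    by (simp add: \<gamma>_def)
qed (fact)

lemma continuous_gradient_imp_lipschitz_on:
  fixes f :: "'a::euclidean_space \<Rightarrow> real"
  assumes "compact S" "convex S"
    and "\<And>y. y \<in> S \<Longrightarrow> (f has_derivative (\<lambda>h. D y \<bullet> h)) (at y within S)"
    and "continuous_on S D"
  obtains M where "0 \<le> M" "M-lipschitz_on S f"
proof -
  obtain M where "M > 0" and M: "\<And>y. y \<in> S \<Longrightarrow> norm (D y) \<le> M"
    using compact_imp_bounded[OF compact_continuous_image[OF assms(4,1)]]
    unfolding bounded_pos by auto
  have "M-lipschitz_on S f"
  proof (rule bounded_derivative_imp_lipschitz[OF assms(3) assms(2)])
    fix y assume "y \<in> S"
    have "onorm (\<lambda>h. D y \<bullet> h) \<le> norm (D y)"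
      using onorm_inner_right[OF bounded_linear_ident, of "D y"] by (simp add: onorm_id)
    with M[OF \<open>y \<in> S\<close>] show "onorm (\<lambda>h. D y \<bullet> h) \<le> M" by simp
  qed (use \<open>M > 0\<close> in auto)
  with \<open>M > 0\<close> show thesis by (intro that) auto
qed

section \<open>Piecewise continuously differentiable functions\<close>

text \<open>U i, W i and D i stand for the open set O i, the C1 function V i and its gradient.\<close>

locale piecewise_C1_function =
  fixes I :: "'i set" and X U :: "'i \<Rightarrow> 'a::euclidean_space set"
    and W :: "'i \<Rightarrow> 'a \<Rightarrow> real" and D :: "'i \<Rightarrow> 'a \<Rightarrow> 'a" and V :: "'a \<Rightarrow> real"
  assumes finite_index: "finite I"
    and closed_piece: "\<And>i. i \<in> I \<Longrightarrow> closed (X i)"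
    and open_domain: "\<And>i. i \<in> I \<Longrightarrow> open (U i)"
    and pieces_cover: "(\<Union>i\<in>I. X i) = UNIV"
    and piece_subset_domain: "\<And>i. i \<in> I \<Longrightarrow> X i \<subseteq> U i"
    and V_eq_piece: "\<And>i x. i \<in> I \<Longrightarrow> x \<in> X i \<Longrightarrow> V x = W i x"
    and piece_has_derivative: "\<And>i x. i \<in> I \<Longrightarrow> x \<in> U i \<Longrightarrow> (W i has_derivative (\<lambda>h. D i x \<bullet> h)) (at x)"
    and continuous_gradient: "\<And>i. i \<in> I \<Longrightarrow> continuous_on (U i) (D i)"
begin

lemma continuous_V: "continuous_on UNIV V"
proof -
  have "continuous_on (X i) V" if "i \<in> I" for i
  proof (rule continuous_on_eq)
    show "continuous_on (X i) (W i)"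
    proof (rule has_derivative_continuous_on)
      fix x assume "x \<in> X i"
      with piece_subset_domain[OF that] have "x \<in> U i" by blast
      then show "(W i has_derivative (\<lambda>h. D i x \<bullet> h)) (at x within X i)"
        by (rule has_derivative_at_withinI[OF piece_has_derivative[OF that]])
    qed
  qed (simp add: V_eq_piece[OF that])
  then have "continuous_on (\<Union>i\<in>I. X i) V"
    using finite_index closed_piece by (intro continuous_on_closed_Union) auto
  then show ?thesis by (simp add: pieces_cover)
qed

lemma gradient_in_pieces:
  assumes "(V has_derivative (\<lambda>h. g \<bullet> h)) (at y)"
  shows "\<exists>i\<in>I. y \<in> X i \<and> g = D i y"
proof (rule ccontr)
  assume no_piece: "\<not> ?thesis"
  define A where "A = {i\<in>I. y \<in> X i}"
  have "finite A" using finite_index by (simp add: A_def)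
  moreover have "g - D i y \<noteq> 0" if "i \<in> A" for i
    using no_piece that by (auto simp: A_def)
  ultimately obtain h where h: "\<And>i. i \<in> A \<Longrightarrow> (g - D i y) \<bullet> h \<noteq> 0"
    by (rule exists_inner_nonzero[of A "\<lambda>i. g - D i y"]) auto
  have "\<forall>\<^sub>F \<tau> in at 0. y + \<tau> *\<^sub>R h \<notin> X i" if "i \<in> I" for i
  proof (cases "i \<in> A")
    case True
    then have "y \<in> U i" using piece_subset_domain by (auto simp: A_def)
    have "((\<lambda>x. V x - W i x) has_derivative (\<lambda>k. (g - D i y) \<bullet> k)) (at y)"
      using has_derivative_diff[OF assms piece_has_derivative[OF that \<open>y \<in> U i\<close>]]
      by (simp add: inner_diff_left)
    then have "\<forall>\<^sub>F \<tau> in at 0. V (y + \<tau> *\<^sub>R h) - W i (y + \<tau> *\<^sub>R h) \<noteq> V y - W i y"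
      by (rule eventually_ne_along_line) (use h True in simp)
    then show ?thesis
      by (rule eventually_mono) (use V_eq_piece that True in \<open>auto simp: A_def\<close>)
  next
    case False
    have "((\<lambda>\<tau>::real. y + \<tau> *\<^sub>R h) \<longlongrightarrow> y) (at 0)"
      by (auto intro!: tendsto_eq_intros)
    with False that show ?thesis
      by (intro eventually_notin_closed closed_piece) (auto simp: A_def)
  qed
  then have "\<forall>\<^sub>F \<tau> in at (0::real). \<forall>i\<in>I. y + \<tau> *\<^sub>R h \<notin> X i"
    using finite_index by (intro eventually_ball_finite) auto
  then obtain \<tau> :: real where "\<forall>i\<in>I. y + \<tau> *\<^sub>R h \<notin> X i"
    using eventually_happens'[OF at_neq_bot] by blast
  with pieces_cover show False by blast
qed

lemma clarke_grad_subset_hull: "clarke_grad V x \<subseteq> convex hull {D i x | i. i \<in> I \<and> x \<in> X i}"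
  unfolding clarke_grad_def
proof (rule hull_mono, safe)
  fix g xs gs
  assume der: "\<forall>k. (V has_derivative (\<lambda>h. gs k \<bullet> h)) (at (xs k))"
    and "xs \<longlonglongrightarrow> x" "gs \<longlonglongrightarrow> g"
  define \<Gamma> where "\<Gamma> = (\<Union>i\<in>I. (\<lambda>y. (y, D i y)) ` X i)"
  have "closed \<Gamma>"
    unfolding \<Gamma>_def using finite_index closed_piece piece_subset_domain
    by (intro closed_UN ballI continuous_closed_graph continuous_on_subset[OF continuous_gradient]) auto
  moreover have "(xs k, gs k) \<in> \<Gamma>" for k
    using gradient_in_pieces[OF der[rule_format, of k]] by (auto simp: \<Gamma>_def)
  ultimately have "(x, g) \<in> \<Gamma>"
    using \<open>xs \<longlonglongrightarrow> x\<close> \<open>gs \<longlonglongrightarrow> g\<close> by (intro Lim_in_closed_set[OF _ _ _ tendsto_Pair]) auto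
  then show "\<exists>i. g = D i x \<and> i \<in> I \<and> x \<in> X i" by (auto simp: \<Gamma>_def)
qed

lemma locally_lipschitz_V: "locally_lipschitz V"
  unfolding locally_lipschitz_def
proof
  fix x
  define A where "A = {i\<in>I. x \<in> X i}"
  have "finite A" using finite_index by (simp add: A_def)
  have "open ((\<Inter>i\<in>A. U i) \<inter> (\<Inter>i\<in>I - A. - X i))"
    using \<open>finite A\<close> finite_index
    by (intro open_Int open_INT ballI open_domain open_Compl closed_piece) (auto simp: A_def)
  moreover have "x \<in> (\<Inter>i\<in>A. U i) \<inter> (\<Inter>i\<in>I - A. - X i)"
    using piece_subset_domain by (auto simp: A_def)
  ultimately obtain r where "r > 0" and r: "cball x r \<subseteq> (\<Inter>i\<in>A. U i) \<inter> (\<Inter>i\<in>I - A. - X i)"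
    by (meson open_contains_cball)
  have "\<forall>i\<in>A. \<exists>L. 0 \<le> L \<and> L-lipschitz_on (cball x r) (W i)"
  proof
    fix i assume "i \<in> A"
    then have "i \<in> I" and sub: "cball x r \<subseteq> U i" using r by (auto simp: A_def)
    have "(W i has_derivative (\<lambda>h. D i y \<bullet> h)) (at y within cball x r)" if "y \<in> cball x r" for y
      using sub that by (intro has_derivative_at_withinI[OF piece_has_derivative[OF \<open>i \<in> I\<close>]]) blast
    moreover have "continuous_on (cball x r) (D i)"
      using continuous_gradient[OF \<open>i \<in> I\<close>] sub by (rule continuous_on_subset)
    ultimately obtain L where "0 \<le> L" "L-lipschitz_on (cball x r) (W i)"
      by (rule continuous_gradient_imp_lipschitz_on[OF compact_cball convex_cball])
    then show "\<exists>L. 0 \<le> L \<and> L-lipschitz_on (cball x r) (W i)" by blast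
  qed
  then obtain L where L: "\<forall>i\<in>A. 0 \<le> L i \<and> (L i)-lipschitz_on (cball x r) (W i)"
    by (rule bchoice[THEN exE])
  have "(\<Sum>i\<in>A. L i)-lipschitz_on (cball x r) V"
  proof (rule lipschitz_on_convex_closed_cover[where I=A and C=X and g=W])
    show "cball x r \<subseteq> (\<Union>i\<in>A. X i)"
    proof
      fix y assume "y \<in> cball x r"
      obtain i where "i \<in> I" "y \<in> X i" using pieces_cover by blast
      moreover from this \<open>y \<in> cball x r\<close> r have "i \<in> A" by blast
      ultimately show "y \<in> (\<Union>i\<in>A. X i)" by blast
    qed
    show "(\<Sum>i\<in>A. L i)-lipschitz_on (cball x r) (W i)" if "i \<in> A" for i
      by (rule lipschitz_on_le[of "L i"]) (use L \<open>finite A\<close> that in \<open>auto intro: member_le_sum\<close>)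
    show "0 \<le> (\<Sum>i\<in>A. L i)" using L by (simp add: sum_nonneg)
    show "V y = W i y" if "i \<in> A" "y \<in> X i" for i y
      using V_eq_piece that by (simp add: A_def)
  qed (use \<open>finite A\<close> closed_piece in \<open>auto simp: A_def\<close>)
  then show "\<exists>e>0. \<exists>L. L-lipschitz_on (ball x e) V"
    using \<open>r > 0\<close> by (meson ball_subset_cball lipschitz_on_subset)
qed

lemma clarke_grad_inner_const:
  fixes \<phi> :: "real \<Rightarrow> 'a"
  assumes "open S" "t \<in> S" "continuous_on S \<phi>" "(\<phi> has_vector_derivative d) (at t)"
    and limpt: "\<And>i. i \<in> I \<Longrightarrow> \<phi> t \<in> X i \<Longrightarrow> t islimpt \<phi> -` X i"
    and no_extremum: "\<And>q. q \<in> \<rat> \<Longrightarrow>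
      \<not> strict_local_max (\<lambda>s. V (\<phi> s) - q * s) t \<and> \<not> strict_local_max (\<lambda>s. q * s - V (\<phi> s)) t"
  shows "\<exists>c. \<forall>v\<in>clarke_grad V (\<phi> t). v \<bullet> d = c"
proof -
  define A where "A = {i\<in>I. \<phi> t \<in> X i}"
  have "finite A" using finite_index by (simp add: A_def)
  have \<phi>_tendsto: "(\<phi> \<longlongrightarrow> \<phi> t) (at t)"
    using has_vector_derivative_continuous[OF assms(4)] by (simp add: continuous_at)
  have slope: "((\<lambda>s. (V (\<phi> s) - V (\<phi> t)) / (s - t)) \<longlongrightarrow> D i (\<phi> t) \<bullet> d) (at t within \<phi> -` X i)"
    if "i \<in> A" for i
  proof -
    have "i \<in> I" "\<phi> t \<in> U i" using that piece_subset_domain by (auto simp: A_def)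
    have "((\<lambda>s. W i (\<phi> s)) has_derivative (\<lambda>h. D i (\<phi> t) \<bullet> (h *\<^sub>R d))) (at t)"
      using has_derivative_compose[OF assms(4)[unfolded has_vector_derivative_def]
          piece_has_derivative[OF \<open>i \<in> I\<close> \<open>\<phi> t \<in> U i\<close>]] by simp
    then have "((\<lambda>s. W i (\<phi> s)) has_real_derivative D i (\<phi> t) \<bullet> d) (at t)"
      by (rule has_derivative_imp_has_field_derivative) simp
    then have "((\<lambda>s. (W i (\<phi> s) - W i (\<phi> t)) / (s - t)) \<longlongrightarrow> D i (\<phi> t) \<bullet> d) (at t)"
      by (simp add: has_field_derivative_iff)
    then have "((\<lambda>s. (W i (\<phi> s) - W i (\<phi> t)) / (s - t)) \<longlongrightarrow> D i (\<phi> t) \<bullet> d) (at t within \<phi> -` X i)"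
      by (rule tendsto_within_subset) simp
    moreover have "\<forall>\<^sub>F s in at t within \<phi> -` X i. s \<in> \<phi> -` X i"
      by (simp add: eventually_at_filter)
    then have "\<forall>\<^sub>F s in at t within \<phi> -` X i.
        (W i (\<phi> s) - W i (\<phi> t)) / (s - t) = (V (\<phi> s) - V (\<phi> t)) / (s - t)"
      by (rule eventually_mono) (use V_eq_piece[OF \<open>i \<in> I\<close>] that in \<open>simp add: A_def\<close>)
    ultimately show ?thesis by (rule Lim_transform_eventually)
  qed
  have "\<forall>\<^sub>F s in at t. \<phi> s \<notin> X i" if "i \<in> I - A" for i
    using that \<phi>_tendsto by (intro eventually_notin_closed closed_piece) (auto simp: A_def)
  then have "\<forall>\<^sub>F s in at t. \<forall>i\<in>I - A. \<phi> s \<notin> X i"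
    using finite_index by (intro eventually_ball_finite) auto
  then have cover: "\<forall>\<^sub>F s in at t. \<exists>i\<in>A. s \<in> \<phi> -` X i"
    by (rule eventually_mono) (use pieces_cover in blast)
  have continuous_F: "continuous_on S (\<lambda>s. V (\<phi> s))"
    using continuous_V assms(3) by (rule continuous_on_compose2) auto
  have limpt_A: "t islimpt \<phi> -` X i" if "i \<in> A" for i
    using limpt that by (simp add: A_def)
  obtain i0 where "i0 \<in> A" using pieces_cover by (auto simp: A_def)
  define c where "c = D i0 (\<phi> t) \<bullet> d"
  have "D i (\<phi> t) \<bullet> d = c" if "i \<in> A" for i
    unfolding c_def
    by (rule slopes_eq_if_no_strict_local_extremum[OF \<open>finite A\<close> assms(1,2) continuous_F cover
        limpt_A slope no_extremum that \<open>i0 \<in> A\<close>])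
  then have "{D i (\<phi> t) | i. i \<in> I \<and> \<phi> t \<in> X i} \<subseteq> {v. v \<bullet> d = c}"
    unfolding A_def by blast
  moreover have "convex {v. v \<bullet> d = c}"
    using convex_hyperplane[of d c] by (simp add: inner_commute)
  ultimately have "convex hull {D i (\<phi> t) | i. i \<in> I \<and> \<phi> t \<in> X i} \<subseteq> {v. v \<bullet> d = c}"
    by (rule hull_minimal)
  with clarke_grad_subset_hull[of "\<phi> t"] show ?thesis by blast
qed

lemma AE_clarke_grad_inner_const:
  fixes \<phi> :: "real \<Rightarrow> 'a"
  assumes "continuous_on {0<..} \<phi>"
  shows "AE t in lborel. 0 \<le> t \<longrightarrow> (\<forall>d. (\<phi> has_vector_derivative d) (at t) \<longrightarrow>
           (\<exists>c. \<forall>v\<in>clarke_grad V (\<phi> t). v \<bullet> d = c))"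
proof (rule AE_I')
  define N where "N = {0} \<union> (\<Union>i\<in>I. {t. t isolated_in \<phi> -` X i}) \<union>
    (\<Union>q\<in>\<rat>. {t. strict_local_max (\<lambda>s. V (\<phi> s) - q * s) t} \<union>
      {t. strict_local_max (\<lambda>s. q * s - V (\<phi> s)) t})"
  have "countable N"
    unfolding N_def
    by (intro countable_Un countable_UN[OF countable_finite[OF finite_index]]
        countable_UN[OF countable_rat] countable_isolated_points countable_strict_local_max) simp
  then show "N \<in> null_sets lborel" by (rule countable_imp_null_set_lborel)
  show "{t \<in> space lborel. \<not> (0 \<le> t \<longrightarrow> (\<forall>d. (\<phi> has_vector_derivative d) (at t) \<longrightarrow>
           (\<exists>c. \<forall>v\<in>clarke_grad V (\<phi> t). v \<bullet> d = c)))} \<subseteq> N"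
  proof (safe, rule ccontr)
    fix t d assume "0 \<le> t" "t \<notin> N" and der: "(\<phi> has_vector_derivative d) (at t)"
      and not_const: "\<nexists>c. \<forall>v\<in>clarke_grad V (\<phi> t). v \<bullet> d = c"
    have "t \<in> {0<..}" using \<open>0 \<le> t\<close> \<open>t \<notin> N\<close> by (auto simp: N_def)
    moreover have "t islimpt \<phi> -` X i" if "i \<in> I" "\<phi> t \<in> X i" for i
      using \<open>t \<notin> N\<close> that by (auto simp: N_def isolated_in_islimpt_iff)
    moreover have "\<not> strict_local_max (\<lambda>s. V (\<phi> s) - q * s) t \<and>
        \<not> strict_local_max (\<lambda>s. q * s - V (\<phi> s)) t" if "q \<in> \<rat>" for q
      using \<open>t \<notin> N\<close> that by (auto simp: N_def)
    ultimately have "\<exists>c. \<forall>v\<in>clarke_grad V (\<phi> t). v \<bullet> d = c"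
      by (intro clarke_grad_inner_const[OF open_greaterThan _ assms der])
    with not_const show False by blast
  qed
qed

theorem nonpathological_V: "nonpathological V"
  unfolding nonpathological_def
proof (intro conjI allI impI)
  show "locally_lipschitz V" by (rule locally_lipschitz_V)
  fix \<phi> :: "real \<Rightarrow> 'a" assume "abs_cont_Rplus \<phi>"
  then show "AE t in lborel. 0 \<le> t \<longrightarrow> (\<forall>d. (\<phi> has_vector_derivative d) (at t) \<longrightarrow>
      (\<exists>a. \<forall>v\<in>clarke_grad V (\<phi> t). v \<bullet> d = a))"
    by (intro AE_clarke_grad_inner_const continuous_on_if_abs_cont_Rplus)
qed

end

theorem lemma4:
  fixes K :: nat and X Op :: "nat \<Rightarrow> 'a::euclidean_space set" and V :: "'a \<Rightarrow> real"
  assumes "proper_partition K X Op"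
    and "piecewise_C1 K X Op V"
  shows "nonpathological V"
proof -
  obtain W where W: "\<forall>i\<in>{1..K}. C1_on (Op i) (W i) \<and> (\<forall>x\<in>X i. V x = W i x)"
    using assms(2) unfolding piecewise_C1_def by blast
  then have "\<forall>i\<in>{1..K}. \<exists>Di. (\<forall>x\<in>Op i. (W i has_derivative (\<lambda>h. Di x \<bullet> h)) (at x)) \<and>
      continuous_on (Op i) Di"
    unfolding C1_on_def by blast
  then obtain D where D: "\<forall>i\<in>{1..K}. (\<forall>x\<in>Op i. (W i has_derivative (\<lambda>h. D i x \<bullet> h)) (at x)) \<and>
      continuous_on (Op i) (D i)"
    by (rule bchoice[THEN exE])
  interpret piecewise_C1_function "{1..K}" X Op W D V
    using assms(1) W D unfolding proper_partition_def by unfold_locales auto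
  show ?thesis by (rule nonpathological_V)
qed

end
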